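(* Let $A$ be a commutative noetherian local ring, let $x,y\in A$ be an exact pair of zero divisors, and let $a\in A$. Then there is an isomorphism of $A$-algebras $\operatorname{End}_A(G_a)^{\mathrm{op}}\cong\operatorname{End}_A(H_a)$. In particular, $G_a$ is indecomposable if and only if $H_a$ is indecomposable.
   Context: Two non-units $x,y\in A$ form an exact pair of zero divisors if $\operatorname{Ann}_A(x)=(y)$ and $\operatorname{Ann}_A(y)=(x)$. For $a\in A$, let $\gamma_a=\begin{pmatrix} x & a\\ 0 & y\end{pmatrix}$ and $\eta_a=\begin{pmatrix} y & -a\\ 0 & x\end{pmatrix}$, viewed as $A$-linear maps $A^2\to A^2$ acting on column vectors, and set $G_a=\operatorname{Coker}\gamma_a$, $H_a=\operatorname{Coker}\eta_a$. *)

theory Defs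
  imports Main "HOL-Library.Product_Plus"
begin

definition is_ideal :: "'a::comm_ring_1 set \<Rightarrow> bool" where
  "is_ideal I \<longleftrightarrow> 0 \<in> I \<and> (\<forall>u\<in>I. \<forall>v\<in>I. u + v \<in> I) \<and> (\<forall>r. \<forall>u\<in>I. r * u \<in> I)"

definition ideal_gen :: "'a::comm_ring_1 set \<Rightarrow> 'a set" where
  "ideal_gen F = {\<Sum>f\<in>F. c f * f | c. True}"

definition noetherian_ring :: "'a::comm_ring_1 itself \<Rightarrow> bool" where
  "noetherian_ring _ \<longleftrightarrow>
     (\<forall>I::'a set. is_ideal I \<longrightarrow> (\<exists>F. finite F \<and> F \<subseteq> I \<and> I = ideal_gen F))"

definition maximal_ideal :: "'a::comm_ring_1 set \<Rightarrow> bool" where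
  "maximal_ideal m \<longleftrightarrow> is_ideal m \<and> m \<noteq> UNIV \<and>
     (\<forall>J. is_ideal J \<and> m \<subseteq> J \<longrightarrow> J = m \<or> J = UNIV)"

definition local_ring :: "'a::comm_ring_1 itself \<Rightarrow> bool" where
  "local_ring _ \<longleftrightarrow> (\<exists>!m::'a set. maximal_ideal m)"

definition Ann :: "'a::comm_ring_1 \<Rightarrow> 'a set" where
  "Ann x = {z. z * x = 0}"

definition principal_ideal :: "'a::comm_ring_1 \<Rightarrow> 'a set" where
  "principal_ideal y = {r * y | r. True}"

definition exact_pair :: "'a::comm_ring_1 \<Rightarrow> 'a \<Rightarrow> bool" where
  "exact_pair x y \<longleftrightarrow> \<not> x dvd 1 \<and> \<not> y dvd 1 \<and>
     Ann x = principal_ideal y \<and> Ann y = principal_ideal x"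

definition vsmul :: "'a::comm_ring_1 \<Rightarrow> 'a \<times> 'a \<Rightarrow> 'a \<times> 'a" where
  "vsmul r v = (r * fst v, r * snd v)"

text \<open>gamma_a = [[x, a],[0, y]] acting on column vectors (u,v).\<close>
definition gamma_map :: "'a::comm_ring_1 \<Rightarrow> 'a \<Rightarrow> 'a \<Rightarrow> 'a \<times> 'a \<Rightarrow> 'a \<times> 'a" where
  "gamma_map x y a v = (x * fst v + a * snd v, y * snd v)"

text \<open>eta_a = [[y, -a],[0, x]].\<close>
definition eta_map :: "'a::comm_ring_1 \<Rightarrow> 'a \<Rightarrow> 'a \<Rightarrow> 'a \<times> 'a \<Rightarrow> 'a \<times> 'a" where
  "eta_map x y a v = (y * fst v - a * snd v, x * snd v)"

section \<open>Cokernel A^2 / N as the module of cosets of a submodule N\<close>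

definition coset :: "('a::comm_ring_1 \<times> 'a) set \<Rightarrow> 'a \<times> 'a \<Rightarrow> ('a \<times> 'a) set" where
  "coset N v = (\<lambda>n. v + n) ` N"

definition coker :: "('a::comm_ring_1 \<times> 'a) set \<Rightarrow> ('a \<times> 'a) set set" where
  "coker N = range (coset N)"

definition cadd :: "('a::comm_ring_1 \<times> 'a) set \<Rightarrow> ('a \<times> 'a) set \<Rightarrow> ('a \<times> 'a) set \<Rightarrow> ('a \<times> 'a) set" where
  "cadd N S T = {s + t | s t. s \<in> S \<and> t \<in> T}"

definition csmul :: "('a::comm_ring_1 \<times> 'a) set \<Rightarrow> 'a \<Rightarrow> ('a \<times> 'a) set \<Rightarrow> ('a \<times> 'a) set" where
  "csmul N r S = {vsmul r s + n | s n. s \<in> S \<and> n \<in> N}"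

definition czero :: "('a::comm_ring_1 \<times> 'a) set \<Rightarrow> ('a \<times> 'a) set" where
  "czero N = coset N 0"

text \<open>G_a and H_a: cokernels of gamma_a and eta_a.\<close>
definition G_mod :: "'a::comm_ring_1 \<Rightarrow> 'a \<Rightarrow> 'a \<Rightarrow> ('a \<times> 'a) set" where
  "G_mod x y a = range (gamma_map x y a)"

definition H_mod :: "'a::comm_ring_1 \<Rightarrow> 'a \<Rightarrow> 'a \<Rightarrow> ('a \<times> 'a) set" where
  "H_mod x y a = range (eta_map x y a)"

type_synonym 'a cset = "('a \<times> 'a) set"

definition End_mod :: "('a::comm_ring_1 \<times> 'a) set \<Rightarrow> ('a cset \<Rightarrow> 'a cset) set" where
  "End_mod N = {f. (\<forall>S\<in>coker N. f S \<in> coker N)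
      \<and> (\<forall>S. S \<notin> coker N \<longrightarrow> f S = undefined)
      \<and> (\<forall>S\<in>coker N. \<forall>T\<in>coker N. f (cadd N S T) = cadd N (f S) (f T))
      \<and> (\<forall>r. \<forall>S\<in>coker N. f (csmul N r S) = csmul N r (f S))}"

definition end_comp :: "('a::comm_ring_1 \<times> 'a) set \<Rightarrow> ('a cset \<Rightarrow> 'a cset) \<Rightarrow> ('a cset \<Rightarrow> 'a cset) \<Rightarrow> ('a cset \<Rightarrow> 'a cset)" where
  "end_comp N f g = (\<lambda>S. if S \<in> coker N then f (g S) else undefined)"

definition end_add :: "('a::comm_ring_1 \<times> 'a) set \<Rightarrow> ('a cset \<Rightarrow> 'a cset) \<Rightarrow> ('a cset \<Rightarrow> 'a cset) \<Rightarrow> ('a cset \<Rightarrow> 'a cset)" where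
  "end_add N f g = (\<lambda>S. if S \<in> coker N then cadd N (f S) (g S) else undefined)"

definition end_smul :: "('a::comm_ring_1 \<times> 'a) set \<Rightarrow> 'a \<Rightarrow> ('a cset \<Rightarrow> 'a cset) \<Rightarrow> ('a cset \<Rightarrow> 'a cset)" where
  "end_smul N r f = (\<lambda>S. if S \<in> coker N then csmul N r (f S) else undefined)"

definition end_id :: "('a::comm_ring_1 \<times> 'a) set \<Rightarrow> ('a cset \<Rightarrow> 'a cset)" where
  "end_id N = (\<lambda>S. if S \<in> coker N then S else undefined)"

definition end_op_iso :: "('a::comm_ring_1 \<times> 'a) set \<Rightarrow> ('a \<times> 'a) set \<Rightarrow> bool" where
  "end_op_iso N M \<longleftrightarrow> (\<exists>\<Phi>. bij_betw \<Phi> (End_mod N) (End_mod M)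
      \<and> (\<forall>f\<in>End_mod N. \<forall>g\<in>End_mod N. \<Phi> (end_comp N f g) = end_comp M (\<Phi> g) (\<Phi> f))
      \<and> (\<forall>f\<in>End_mod N. \<forall>g\<in>End_mod N. \<Phi> (end_add N f g) = end_add M (\<Phi> f) (\<Phi> g))
      \<and> (\<forall>r. \<forall>f\<in>End_mod N. \<Phi> (end_smul N r f) = end_smul M r (\<Phi> f))
      \<and> \<Phi> (end_id N) = end_id M)"

definition is_submod :: "('a::comm_ring_1 \<times> 'a) set \<Rightarrow> 'a cset set \<Rightarrow> bool" where
  "is_submod N P \<longleftrightarrow> P \<subseteq> coker N \<and> czero N \<in> P
     \<and> (\<forall>S\<in>P. \<forall>T\<in>P. cadd N S T \<in> P) \<and> (\<forall>r. \<forall>S\<in>P. csmul N r S \<in> P)"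

definition indecomposable :: "('a::comm_ring_1 \<times> 'a) set \<Rightarrow> bool" where
  "indecomposable N \<longleftrightarrow> coker N \<noteq> {czero N}
     \<and> (\<forall>P Q. is_submod N P \<and> is_submod N Q \<and> P \<inter> Q = {czero N}
            \<and> {cadd N S T | S T. S \<in> P \<and> T \<in> Q} = coker N
            \<longrightarrow> P = {czero N} \<or> Q = {czero N})"

end

theory Submission
  imports Defs
begin

text \<open>
  \<open>G\<^sub>a\<close> and \<open>H\<^sub>a\<close> are the cokernels of \<open>\<Gamma> = [[x, a], [0, y]]\<close> and of its adjugate
  \<open>adj \<Gamma> = [[y, -a], [0, x]]\<close>. Because \<open>x, y\<close> is an exact pair, both products of the two
  matrices vanish and the kernel of each is the image of the other. An endomorphism of
  \<open>coker \<Gamma>\<close> lifts to a matrix \<open>P\<close> with \<open>P \<Gamma> = \<Gamma> Q\<close>; then \<open>adj \<Gamma> \<cdot> P\<close> is killed by \<open>\<Gamma>\<close>, so it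
  factors as \<open>P' \<cdot> adj \<Gamma>\<close>, and exactness shows that \<open>adj P'\<close> induces a well-defined
  endomorphism of \<open>coker (adj \<Gamma>)\<close>. Adjugation reverses products and exchanges the two
  matrices, so this is an anti-isomorphism of endomorphism algebras, inverse to the same
  construction with the roles swapped. Finally a cokernel is indecomposable iff its
  endomorphism algebra has exactly the two idempotents \<open>0 \<noteq> 1\<close>, and anti-isomorphisms
  preserve this.
\<close>

section \<open>Cosets of a submodule of \<open>A\<^sup>2\<close>\<close>

lemma vsmul_minus_one [simp]: "vsmul (- 1) v = - v"
  by (simp add: vsmul_def prod_eq_iff)

lemma vsmul_diff_right: "vsmul r (u - v) = vsmul r u - vsmul r v"
  by (simp add: vsmul_def algebra_simps)

locale pair_submodule =
  fixes N :: "('a::comm_ring_1 \<times> 'a) set"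
  assumes zero_mem [simp]: "0 \<in> N"
    and add_mem: "u \<in> N \<Longrightarrow> v \<in> N \<Longrightarrow> u + v \<in> N"
    and vsmul_mem: "u \<in> N \<Longrightarrow> vsmul r u \<in> N"
begin

lemma uminus_mem: "u \<in> N \<Longrightarrow> - u \<in> N"
  using vsmul_mem[of u "- 1"] by simp

lemma diff_mem: "u \<in> N \<Longrightarrow> v \<in> N \<Longrightarrow> u - v \<in> N"
  using add_mem[of u "- v"] uminus_mem[of v] by simp

lemma mem_coset_iff: "w \<in> coset N v \<longleftrightarrow> w - v \<in> N"
  unfolding coset_def by (auto simp: image_iff intro!: bexI[of _ "w - v"])

lemma coset_eq_iff: "coset N v = coset N w \<longleftrightarrow> v - w \<in> N"
proof
  assume "coset N v = coset N w"
  then show "v - w \<in> N"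
    using mem_coset_iff[of v v] by (simp add: mem_coset_iff)
next
  assume vw: "v - w \<in> N"
  have "z - v \<in> N \<longleftrightarrow> z - w \<in> N" for z
    using add_mem[OF _ vw, of "z - v"] diff_mem[OF _ vw, of "z - w"] by auto
  then show "coset N v = coset N w"
    by (auto simp: mem_coset_iff)
qed

lemma coset_eq_zero_iff: "coset N v = czero N \<longleftrightarrow> v \<in> N"
  by (simp add: czero_def coset_eq_iff)

lemma cadd_coset: "cadd N (coset N v) (coset N w) = coset N (v + w)"
proof (rule set_eqI)
  fix z
  show "z \<in> cadd N (coset N v) (coset N w) \<longleftrightarrow> z \<in> coset N (v + w)"
  proof
    assume "z \<in> cadd N (coset N v) (coset N w)"
    then obtain s t where "z = s + t" "s - v \<in> N" "t - w \<in> N"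
      by (auto simp: cadd_def mem_coset_iff)
    then show "z \<in> coset N (v + w)"
      using add_mem[of "s - v" "t - w"] by (simp add: mem_coset_iff algebra_simps)
  next
    assume "z \<in> coset N (v + w)"
    then have "z - w \<in> coset N v" "w \<in> coset N w"
      by (simp_all add: mem_coset_iff algebra_simps)
    then show "z \<in> cadd N (coset N v) (coset N w)"
      unfolding cadd_def by (intro CollectI exI[of _ "z - w"] exI[of _ w]) simp
  qed
qed

lemma csmul_coset: "csmul N r (coset N v) = coset N (vsmul r v)"
proof (rule set_eqI)
  fix z
  show "z \<in> csmul N r (coset N v) \<longleftrightarrow> z \<in> coset N (vsmul r v)"
  proof
    assume "z \<in> csmul N r (coset N v)"
    then obtain s n where "z = vsmul r s + n" "s - v \<in> N" "n \<in> N"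
      by (auto simp: csmul_def mem_coset_iff)
    then show "z \<in> coset N (vsmul r v)"
      using add_mem[OF vsmul_mem[of "s - v" r]]
      by (simp add: mem_coset_iff vsmul_diff_right algebra_simps)
  next
    assume "z \<in> coset N (vsmul r v)"
    then show "z \<in> csmul N r (coset N v)"
      unfolding csmul_def
      by (intro CollectI exI[of _ v] exI[of _ "z - vsmul r v"]) (simp add: mem_coset_iff)
  qed
qed

lemma coset_in_coker [simp]: "coset N v \<in> coker N"
  by (simp add: coker_def)

lemma cokerE:
  assumes "S \<in> coker N"
  obtains v where "S = coset N v"
  using assms by (auto simp: coker_def)

end

section \<open>\<open>2 \<times> 2\<close> matrices\<close>

datatype 'a mat2 = Mat2 (m11: 'a) (m12: 'a) (m21: 'a) (m22: 'a)

instantiation mat2 :: (comm_ring_1) ring_1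
begin

definition "0 = Mat2 0 0 0 0"
definition "1 = Mat2 1 0 0 1"
definition "A + B = Mat2 (m11 A + m11 B) (m12 A + m12 B) (m21 A + m21 B) (m22 A + m22 B)"
definition "- A = Mat2 (- m11 A) (- m12 A) (- m21 A) (- m22 A)"
definition "A - B = Mat2 (m11 A - m11 B) (m12 A - m12 B) (m21 A - m21 B) (m22 A - m22 B)"
definition "A * B = Mat2 (m11 A * m11 B + m12 A * m21 B) (m11 A * m12 B + m12 A * m22 B)
                         (m21 A * m11 B + m22 A * m21 B) (m21 A * m12 B + m22 A * m22 B)"

instance
  by standard (auto simp: mat2.expand zero_mat2_def one_mat2_def plus_mat2_def uminus_mat2_def
      minus_mat2_def times_mat2_def algebra_simps)

end

lemmas mat2_ops = zero_mat2_def one_mat2_def plus_mat2_def minus_mat2_def times_mat2_def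

definition mat2_apply :: "'a::comm_ring_1 mat2 \<Rightarrow> 'a \<times> 'a \<Rightarrow> 'a \<times> 'a" where
  "mat2_apply A v = (m11 A * fst v + m12 A * snd v, m21 A * fst v + m22 A * snd v)"

definition mat2_adj :: "'a::comm_ring_1 mat2 \<Rightarrow> 'a mat2" where
  "mat2_adj A = Mat2 (m22 A) (- m12 A) (- m21 A) (m11 A)"

definition mat2_scalar :: "'a::comm_ring_1 \<Rightarrow> 'a mat2" where
  "mat2_scalar r = Mat2 r 0 0 r"

lemma mat2_apply_mult: "mat2_apply (A * B) v = mat2_apply A (mat2_apply B v)"
  by (simp add: mat2_apply_def mat2_ops algebra_simps)

lemma mat2_apply_add: "mat2_apply (A + B) v = mat2_apply A v + mat2_apply B v"
  by (simp add: mat2_apply_def mat2_ops algebra_simps)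

lemma mat2_apply_diff: "mat2_apply (A - B) v = mat2_apply A v - mat2_apply B v"
  by (simp add: mat2_apply_def mat2_ops algebra_simps)

lemma mat2_apply_one [simp]: "mat2_apply 1 v = v"
  by (simp add: mat2_apply_def mat2_ops)

lemma mat2_apply_zero [simp]: "mat2_apply 0 v = 0"
  by (simp add: mat2_apply_def mat2_ops zero_prod_def)

lemma mat2_apply_scalar: "mat2_apply (mat2_scalar r) v = vsmul r v"
  by (simp add: mat2_apply_def mat2_scalar_def vsmul_def)

lemma mat2_apply_vector_zero [simp]: "mat2_apply A 0 = 0"
  by (simp add: mat2_apply_def zero_prod_def)

lemma mat2_apply_vector_add: "mat2_apply A (u + v) = mat2_apply A u + mat2_apply A v"
  by (simp add: mat2_apply_def algebra_simps)

lemma mat2_apply_vector_diff: "mat2_apply A (u - v) = mat2_apply A u - mat2_apply A v"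
  by (simp add: mat2_apply_def algebra_simps)

lemma mat2_apply_vsmul: "mat2_apply A (vsmul r v) = vsmul r (mat2_apply A v)"
  by (simp add: mat2_apply_def vsmul_def algebra_simps)

lemma mat2_adj_adj [simp]: "mat2_adj (mat2_adj A) = A"
  by (simp add: mat2_adj_def)

lemma mat2_adj_mult: "mat2_adj (A * B) = mat2_adj B * mat2_adj A"
  by (simp add: mat2_adj_def mat2_ops algebra_simps)

lemma mat2_adj_add: "mat2_adj (A + B) = mat2_adj A + mat2_adj B"
  by (simp add: mat2_adj_def mat2_ops algebra_simps)

lemma mat2_adj_diff: "mat2_adj (A - B) = mat2_adj A - mat2_adj B"
  by (simp add: mat2_adj_def mat2_ops algebra_simps)

lemma mat2_adj_zero [simp]: "mat2_adj 0 = 0"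
  by (simp add: mat2_adj_def mat2_ops)

lemma mat2_adj_one [simp]: "mat2_adj 1 = 1"
  by (simp add: mat2_adj_def mat2_ops)

lemma mat2_adj_scalar [simp]: "mat2_adj (mat2_scalar r) = mat2_scalar r"
  by (simp add: mat2_adj_def mat2_scalar_def)

lemma mat2_scalar_zero [simp]: "mat2_scalar 0 = 0"
  by (simp add: mat2_scalar_def mat2_ops)

lemma mat2_scalar_commute: "mat2_scalar r * A = A * mat2_scalar r"
  by (simp add: mat2_scalar_def mat2_ops algebra_simps)

text \<open>Both products equal \<open>det A \<cdot> 1\<close>.\<close>
lemma mat2_mult_adj_commute: "A * mat2_adj A = mat2_adj A * A"
  by (simp add: mat2_adj_def mat2_ops algebra_simps)

lemma range_mat2_apply_subset_iff:
  "range (mat2_apply X) \<subseteq> range (mat2_apply M) \<longleftrightarrow> (\<exists>R. X = M * R)"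
proof
  assume "range (mat2_apply X) \<subseteq> range (mat2_apply M)"
  then obtain w1 w2 where "mat2_apply X (1, 0) = mat2_apply M w1" "mat2_apply X (0, 1) = mat2_apply M w2"
    by (metis rangeE rangeI subsetD)
  then have "X = M * Mat2 (fst w1) (fst w2) (snd w1) (snd w2)"
    by (simp add: mat2_apply_def mat2_ops mat2.expand algebra_simps)
  then show "\<exists>R. X = M * R" ..
qed (auto simp: mat2_apply_mult)

section \<open>Endomorphisms of a cokernel induced by matrices\<close>

definition stabilizes :: "('a::comm_ring_1 \<times> 'a) set \<Rightarrow> 'a mat2 \<Rightarrow> bool" where
  "stabilizes N P \<longleftrightarrow> (\<forall>v\<in>N. mat2_apply P v \<in> N)"

definition induced_endo :: "('a::comm_ring_1 \<times> 'a) set \<Rightarrow> 'a mat2 \<Rightarrow> 'a cset \<Rightarrow> 'a cset" where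
  "induced_endo N P =
     (\<lambda>S. if S \<in> coker N then coset N (mat2_apply P (SOME v. S = coset N v)) else undefined)"

lemma stabilizes_mult: "stabilizes N A \<Longrightarrow> stabilizes N B \<Longrightarrow> stabilizes N (A * B)"
  by (simp add: stabilizes_def mat2_apply_mult)

lemma stabilizes_one: "stabilizes N 1"
  by (simp add: stabilizes_def)

lemma stabilizes_range_iff: "stabilizes (range (mat2_apply M)) P \<longleftrightarrow> (\<exists>Q. P * M = M * Q)"
proof -
  have "stabilizes (range (mat2_apply M)) P \<longleftrightarrow> range (mat2_apply (P * M)) \<subseteq> range (mat2_apply M)"
    by (auto simp: stabilizes_def mat2_apply_mult)
  then show ?thesis
    by (simp add: range_mat2_apply_subset_iff)
qed

lemma pair_submodule_range: "pair_submodule (range (mat2_apply M))"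
proof
  fix u v r
  assume "u \<in> range (mat2_apply M)" "v \<in> range (mat2_apply M)"
  then show "u + v \<in> range (mat2_apply M)" "vsmul r u \<in> range (mat2_apply M)"
    by (auto simp: mat2_apply_vector_add[symmetric] mat2_apply_vsmul[symmetric])
qed (metis mat2_apply_vector_zero rangeI)

context pair_submodule
begin

lemma stabilizes_add: "stabilizes N A \<Longrightarrow> stabilizes N B \<Longrightarrow> stabilizes N (A + B)"
  by (simp add: stabilizes_def mat2_apply_add add_mem)

lemma stabilizes_zero: "stabilizes N 0"
  by (simp add: stabilizes_def)

lemma stabilizes_scalar: "stabilizes N (mat2_scalar r)"
  by (simp add: stabilizes_def mat2_apply_scalar vsmul_mem)

lemma induced_endo_coset:
  assumes "stabilizes N P"
  shows "induced_endo N P (coset N v) = coset N (mat2_apply P v)"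
proof -
  define w where "w = (SOME w. coset N v = coset N w)"
  have "coset N v = coset N w"
    unfolding w_def by (rule someI) (rule refl)
  then have "mat2_apply P (v - w) \<in> N"
    using assms by (simp add: stabilizes_def coset_eq_iff)
  then have "coset N (mat2_apply P w) = coset N (mat2_apply P v)"
    using uminus_mem[of "mat2_apply P (v - w)"] by (simp add: coset_eq_iff mat2_apply_vector_diff)
  then show ?thesis
    by (simp add: induced_endo_def w_def)
qed

lemma End_mod_eqI:
  assumes "f \<in> End_mod N" "g \<in> End_mod N" "\<And>v. f (coset N v) = g (coset N v)"
  shows "f = g"
proof
  fix S
  show "f S = g S"
  proof (cases "S \<in> coker N")
    case True
    then show ?thesis
      using assms(3) by (elim cokerE) simp
  qed (use assms(1,2) in \<open>simp add: End_mod_def\<close>)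
qed

lemma induced_endo_in_End_mod:
  assumes P: "stabilizes N P"
  shows "induced_endo N P \<in> End_mod N"
  unfolding End_mod_def
proof (intro CollectI conjI allI ballI impI)
  show "induced_endo N P S = undefined" if "S \<notin> coker N" for S
    using that by (simp add: induced_endo_def)
qed (elim cokerE; simp add: induced_endo_coset[OF P] cadd_coset csmul_coset mat2_apply_vector_add
      mat2_apply_vsmul)+

lemma induced_endoI:
  assumes "stabilizes N P" "\<And>S. S \<notin> coker N \<Longrightarrow> f S = undefined"
    and "\<And>v. f (coset N v) = coset N (mat2_apply P v)"
  shows "f = induced_endo N P"
proof
  fix S
  show "f S = induced_endo N P S"
  proof (cases "S \<in> coker N")
    case True
    then show ?thesis
      using assms(1,3) by (elim cokerE) (simp add: induced_endo_coset)
  qed (use assms(2) in \<open>simp add: induced_endo_def\<close>)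
qed

text \<open>The columns of the lifting matrix represent the images of the two standard basis vectors.\<close>
lemma End_mod_induced:
  assumes f: "f \<in> End_mod N"
  obtains P where "stabilizes N P" "f = induced_endo N P"
proof -
  have f_add: "f (coset N (u + v)) = cadd N (f (coset N u)) (f (coset N v))"
    and f_smul: "f (coset N (vsmul r u)) = csmul N r (f (coset N u))" for u v r
    using f by (simp_all add: End_mod_def flip: cadd_coset csmul_coset)
  have "f (coset N e) \<in> coker N" for e
    using f by (simp add: End_mod_def)
  then obtain p1 p2 where p1: "f (coset N (1, 0)) = coset N p1" and p2: "f (coset N (0, 1)) = coset N p2"
    by (meson cokerE)
  define P where "P = Mat2 (fst p1) (fst p2) (snd p1) (snd p2)"
  have f_coset: "f (coset N v) = coset N (mat2_apply P v)" for v
  proof -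
    have "v = vsmul (fst v) (1, 0) + vsmul (snd v) (0, 1)"
      by (simp add: vsmul_def)
    then have "f (coset N v) = cadd N (csmul N (fst v) (coset N p1)) (csmul N (snd v) (coset N p2))"
      by (metis f_add f_smul p1 p2)
    also have "\<dots> = coset N (mat2_apply P v)"
      by (simp add: cadd_coset csmul_coset P_def mat2_apply_def vsmul_def algebra_simps)
    finally show ?thesis .
  qed
  have "stabilizes N P"
    unfolding stabilizes_def
  proof
    fix n
    assume "n \<in> N"
    have "coset N n = coset N 0"
      using \<open>n \<in> N\<close> by (simp add: coset_eq_iff)
    then have "coset N (mat2_apply P n) = coset N 0"
      using f_coset[of n] f_coset[of 0] by simp
    then show "mat2_apply P n \<in> N"
      by (simp add: coset_eq_iff)
  qed
  moreover have "f = induced_endo N P"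
    using f by (intro induced_endoI[OF \<open>stabilizes N P\<close>] f_coset) (simp add: End_mod_def)
  ultimately show ?thesis
    using that by blast
qed

lemma induced_endo_eq_iff:
  assumes "stabilizes N P" "stabilizes N Q"
  shows "induced_endo N P = induced_endo N Q \<longleftrightarrow> (\<forall>v. mat2_apply (P - Q) v \<in> N)"
proof
  assume "induced_endo N P = induced_endo N Q"
  then show "\<forall>v. mat2_apply (P - Q) v \<in> N"
    using assms by (metis induced_endo_coset coset_eq_iff mat2_apply_diff)
next
  assume PQ: "\<forall>v. mat2_apply (P - Q) v \<in> N"
  show "induced_endo N P = induced_endo N Q"
  proof (rule End_mod_eqI[OF induced_endo_in_End_mod induced_endo_in_End_mod])
    show "induced_endo N P (coset N v) = induced_endo N Q (coset N v)" for v
      using assms PQ[rule_format, of v] by (simp add: induced_endo_coset coset_eq_iff mat2_apply_diff)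
  qed (use assms in auto)
qed

lemma end_comp_induced:
  "stabilizes N A \<Longrightarrow> stabilizes N B \<Longrightarrow>
    end_comp N (induced_endo N A) (induced_endo N B) = induced_endo N (A * B)"
  by (rule induced_endoI) (simp_all add: stabilizes_mult end_comp_def induced_endo_coset mat2_apply_mult)

lemma end_add_induced:
  "stabilizes N A \<Longrightarrow> stabilizes N B \<Longrightarrow>
    end_add N (induced_endo N A) (induced_endo N B) = induced_endo N (A + B)"
  by (rule induced_endoI) (simp_all add: stabilizes_add end_add_def induced_endo_coset cadd_coset mat2_apply_add)

lemma end_smul_induced:
  "stabilizes N A \<Longrightarrow> end_smul N r (induced_endo N A) = induced_endo N (mat2_scalar r * A)"
  by (rule induced_endoI) (simp_all add: stabilizes_mult stabilizes_scalar end_smul_def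
      induced_endo_coset csmul_coset mat2_apply_mult mat2_apply_scalar)

lemma end_id_induced: "end_id N = induced_endo N 1"
  by (rule induced_endoI) (simp_all add: stabilizes_one end_id_def)

lemma end_comp_closed: "f \<in> End_mod N \<Longrightarrow> g \<in> End_mod N \<Longrightarrow> end_comp N f g \<in> End_mod N"
  by (metis End_mod_induced end_comp_induced induced_endo_in_End_mod stabilizes_mult)

lemma end_id_in_End_mod: "end_id N \<in> End_mod N"
  by (simp add: end_id_induced induced_endo_in_End_mod stabilizes_one)

end

section \<open>The duality of an exact pair of matrices\<close>

locale exact_matrix_pair =
  fixes M M' :: "'a::comm_ring_1 mat2"
  assumes adj_eq: "mat2_adj M = M'"
    and mult_eq_zero: "M * M' = 0"
    and kernel_subset: "mat2_apply M v = 0 \<Longrightarrow> v \<in> range (mat2_apply M')"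
    and kernel_subset': "mat2_apply M' v = 0 \<Longrightarrow> v \<in> range (mat2_apply M)"
begin

abbreviation "N \<equiv> range (mat2_apply M)"
abbreviation "N' \<equiv> range (mat2_apply M')"

lemma mult_eq_zero': "M' * M = 0"
  using mult_eq_zero mat2_mult_adj_commute[of M] by (simp add: adj_eq)

lemma dual: "exact_matrix_pair M' M"
  by unfold_locales
    (use adj_eq mult_eq_zero' kernel_subset kernel_subset' in auto)

lemma right_annihilator_factor: "M * X = 0 \<Longrightarrow> \<exists>R. X = M' * R"
  using kernel_subset
  by (metis (no_types) mat2_apply_mult mat2_apply_zero range_mat2_apply_subset_iff rangeE subsetI)

lemma left_annihilator_factor:
  assumes "X * M' = 0"
  shows "\<exists>R. X = R * M"
proof -
  have "M * mat2_adj X = 0"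
    using arg_cong[OF assms, of mat2_adj] by (simp add: mat2_adj_mult flip: adj_eq)
  then obtain R where "mat2_adj X = M' * R"
    using right_annihilator_factor by blast
  then have "X = mat2_adj R * M"
    by (metis mat2_adj_adj mat2_adj_mult adj_eq)
  then show ?thesis ..
qed

lemma dual_lift_exists:
  assumes "stabilizes N P"
  obtains P' where "M' * P = P' * M'"
proof -
  interpret dual: exact_matrix_pair M' M by (rule dual)
  obtain Q where Q: "P * M = M * Q"
    using assms stabilizes_range_iff by blast
  have "(M' * P) * M = 0"
    by (simp add: mult.assoc Q) (simp add: mult.assoc[symmetric] mult_eq_zero')
  then show ?thesis
    using dual.left_annihilator_factor that by blast
qed

lemma stabilizes_adj_dual_lift:
  assumes "M' * P = P' * M'"
  shows "stabilizes N' (mat2_adj P')"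
proof -
  have "(M * P') * M' = 0"
    by (simp add: mult.assoc flip: assms) (simp add: mult.assoc[symmetric] mult_eq_zero)
  then obtain R where "M * P' = R * M"
    using left_annihilator_factor by blast
  then have "mat2_adj P' * M' = M' * mat2_adj R"
    by (metis mat2_adj_mult adj_eq)
  then show ?thesis
    using stabilizes_range_iff by blast
qed

text \<open>Two lifts of the same endomorphism differ by some \<open>M R\<close>; their dual lifts then differ by
  a multiple of \<open>M\<close> on the right, so the adjugates agree modulo the image of \<open>M'\<close>.\<close>
lemma dual_lift_unique:
  assumes P: "stabilizes N P" and Q: "stabilizes N Q"
    and PQ: "induced_endo N P = induced_endo N Q"
    and P': "M' * P = P' * M'" and Q': "M' * Q = Q' * M'"
  shows "induced_endo N' (mat2_adj P') = induced_endo N' (mat2_adj Q')"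
proof -
  interpret pair_submodule N by (rule pair_submodule_range)
  have "range (mat2_apply (P - Q)) \<subseteq> N"
    using PQ induced_endo_eq_iff[OF P Q] by auto
  then obtain R where R: "P - Q = M * R"
    using range_mat2_apply_subset_iff by blast
  have "(P' - Q') * M' = M' * (P - Q)"
    by (simp add: algebra_simps P' Q')
  also have "\<dots> = 0"
    by (simp add: R mult.assoc[symmetric] mult_eq_zero')
  finally obtain S where "P' - Q' = S * M"
    using left_annihilator_factor by blast
  then have "mat2_adj P' - mat2_adj Q' = M' * mat2_adj S"
    by (metis mat2_adj_diff mat2_adj_mult adj_eq)
  then show ?thesis
    using pair_submodule.induced_endo_eq_iff[OF pair_submodule_range]
      stabilizes_adj_dual_lift[OF P'] stabilizes_adj_dual_lift[OF Q']
    by (metis mat2_apply_mult rangeI)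
qed

definition dual_endo :: "('a cset \<Rightarrow> 'a cset) \<Rightarrow> 'a cset \<Rightarrow> 'a cset" where
  "dual_endo f = induced_endo N' (mat2_adj
     (SOME P'. \<exists>P. stabilizes N P \<and> f = induced_endo N P \<and> M' * P = P' * M'))"

lemma dual_endo_induced:
  assumes P: "stabilizes N P" and P': "M' * P = P' * M'"
  shows "dual_endo (induced_endo N P) = induced_endo N' (mat2_adj P')"
proof -
  define Q' where "Q' = (SOME Q'. \<exists>Q. stabilizes N Q \<and> induced_endo N P = induced_endo N Q
    \<and> M' * Q = Q' * M')"
  have "\<exists>Q. stabilizes N Q \<and> induced_endo N P = induced_endo N Q \<and> M' * Q = Q' * M'"
    unfolding Q'_def by (rule someI[of _ P']) (use P P' in blast)
  then have "induced_endo N' (mat2_adj Q') = induced_endo N' (mat2_adj P')"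
    using dual_lift_unique P P' by metis
  then show ?thesis
    by (simp add: dual_endo_def Q'_def)
qed

lemma End_mod_dual_lift:
  assumes "f \<in> End_mod N"
  obtains P P' where "stabilizes N P" "M' * P = P' * M'" "f = induced_endo N P"
    "dual_endo f = induced_endo N' (mat2_adj P')"
proof -
  interpret pair_submodule N by (rule pair_submodule_range)
  obtain P where P: "stabilizes N P" "f = induced_endo N P"
    using End_mod_induced[OF assms] .
  moreover obtain P' where "M' * P = P' * M'"
    using dual_lift_exists[OF P(1)] .
  ultimately show ?thesis
    using that dual_endo_induced by blast
qed

lemma dual_endo_in_End_mod:
  assumes "f \<in> End_mod N"
  shows "dual_endo f \<in> End_mod N'"
proof -
  obtain P P' where "M' * P = P' * M'" "dual_endo f = induced_endo N' (mat2_adj P')"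
    using End_mod_dual_lift[OF assms] .
  then show ?thesis
    by (simp add: pair_submodule.induced_endo_in_End_mod[OF pair_submodule_range]
        stabilizes_adj_dual_lift)
qed

lemma dual_endo_involutive:
  assumes "f \<in> End_mod N"
  shows "exact_matrix_pair.dual_endo M' M (dual_endo f) = f"
proof -
  interpret dual: exact_matrix_pair M' M by (rule dual)
  obtain P P' where P: "stabilizes N P" and P': "M' * P = P' * M'" and f: "f = induced_endo N P"
    and df: "dual_endo f = induced_endo N' (mat2_adj P')"
    using End_mod_dual_lift[OF assms] .
  have "M * mat2_adj P' = mat2_adj P * M"
    using arg_cong[OF P', of mat2_adj] by (metis mat2_adj_adj mat2_adj_mult adj_eq)
  then have "dual.dual_endo (induced_endo N' (mat2_adj P')) = induced_endo N (mat2_adj (mat2_adj P))"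
    by (rule dual.dual_endo_induced[OF stabilizes_adj_dual_lift[OF P']])
  then show ?thesis
    unfolding df by (simp add: f)
qed

lemma dual_endo_comp:
  assumes "f \<in> End_mod N" "g \<in> End_mod N"
  shows "dual_endo (end_comp N f g) = end_comp N' (dual_endo g) (dual_endo f)"
proof -
  interpret pair_submodule N by (rule pair_submodule_range)
  interpret dual: pair_submodule N' by (rule pair_submodule_range)
  obtain P P' where P: "stabilizes N P" and P': "M' * P = P' * M'" and f: "f = induced_endo N P"
    and df: "dual_endo f = induced_endo N' (mat2_adj P')"
    using End_mod_dual_lift[OF assms(1)] .
  obtain Q Q' where Q: "stabilizes N Q" and Q': "M' * Q = Q' * M'" and g: "g = induced_endo N Q"
    and dg: "dual_endo g = induced_endo N' (mat2_adj Q')"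
    using End_mod_dual_lift[OF assms(2)] .
  have "M' * (P * Q) = (P' * Q') * M'"
    by (simp add: mult.assoc[symmetric] P') (simp add: mult.assoc Q')
  then have "dual_endo (end_comp N f g) = induced_endo N' (mat2_adj Q' * mat2_adj P')"
    by (simp add: f g end_comp_induced[OF P Q] dual_endo_induced[OF stabilizes_mult[OF P Q]]
        mat2_adj_mult)
  also have "\<dots> = end_comp N' (dual_endo g) (dual_endo f)"
    by (simp add: df dg dual.end_comp_induced stabilizes_adj_dual_lift[OF P']
        stabilizes_adj_dual_lift[OF Q'])
  finally show ?thesis .
qed

lemma dual_endo_add:
  assumes "f \<in> End_mod N" "g \<in> End_mod N"
  shows "dual_endo (end_add N f g) = end_add N' (dual_endo f) (dual_endo g)"
proof -
  interpret pair_submodule N by (rule pair_submodule_range)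
  interpret dual: pair_submodule N' by (rule pair_submodule_range)
  obtain P P' where P: "stabilizes N P" and P': "M' * P = P' * M'" and f: "f = induced_endo N P"
    and df: "dual_endo f = induced_endo N' (mat2_adj P')"
    using End_mod_dual_lift[OF assms(1)] .
  obtain Q Q' where Q: "stabilizes N Q" and Q': "M' * Q = Q' * M'" and g: "g = induced_endo N Q"
    and dg: "dual_endo g = induced_endo N' (mat2_adj Q')"
    using End_mod_dual_lift[OF assms(2)] .
  have "M' * (P + Q) = (P' + Q') * M'"
    by (simp add: algebra_simps P' Q')
  then have "dual_endo (end_add N f g) = induced_endo N' (mat2_adj P' + mat2_adj Q')"
    by (simp add: f g end_add_induced[OF P Q] dual_endo_induced[OF stabilizes_add[OF P Q]]
        mat2_adj_add)
  also have "\<dots> = end_add N' (dual_endo f) (dual_endo g)"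
    by (simp add: df dg dual.end_add_induced stabilizes_adj_dual_lift[OF P']
        stabilizes_adj_dual_lift[OF Q'])
  finally show ?thesis .
qed

lemma dual_endo_smul:
  assumes "f \<in> End_mod N"
  shows "dual_endo (end_smul N r f) = end_smul N' r (dual_endo f)"
proof -
  interpret pair_submodule N by (rule pair_submodule_range)
  interpret dual: pair_submodule N' by (rule pair_submodule_range)
  obtain P P' where P: "stabilizes N P" and P': "M' * P = P' * M'" and f: "f = induced_endo N P"
    and df: "dual_endo f = induced_endo N' (mat2_adj P')"
    using End_mod_dual_lift[OF assms] .
  have "M' * (mat2_scalar r * P) = (mat2_scalar r * P') * M'"
    by (metis P' mat2_scalar_commute mult.assoc)
  moreover have "mat2_adj (mat2_scalar r * P') = mat2_scalar r * mat2_adj P'"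
    by (simp add: mat2_adj_mult mat2_scalar_commute)
  ultimately have "dual_endo (end_smul N r f) = induced_endo N' (mat2_scalar r * mat2_adj P')"
    using dual_endo_induced[OF stabilizes_mult[OF stabilizes_scalar P]]
    by (simp add: f end_smul_induced[OF P])
  also have "\<dots> = end_smul N' r (dual_endo f)"
    by (simp add: df dual.end_smul_induced stabilizes_adj_dual_lift[OF P'])
  finally show ?thesis .
qed

lemma dual_endo_id: "dual_endo (end_id N) = end_id N'"
  using dual_endo_induced[OF stabilizes_one, of 1]
  by (simp add: pair_submodule.end_id_induced[OF pair_submodule_range])

lemma end_op_iso: "end_op_iso N N'"
proof -
  interpret dual: exact_matrix_pair M' M by (rule dual)
  have "bij_betw dual_endo (End_mod N) (End_mod N')"
    by (rule bij_betw_byWitness[where f' = dual.dual_endo])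
      (auto simp: dual_endo_involutive dual.dual_endo_involutive dual_endo_in_End_mod
        dual.dual_endo_in_End_mod)
  then show ?thesis
    unfolding end_op_iso_def
    by (intro exI[of _ dual_endo]) (simp add: dual_endo_comp dual_endo_add dual_endo_smul dual_endo_id)
qed

end

section \<open>Indecomposability and idempotents\<close>

text \<open>The zero endomorphism is written as \<open>0 \<cdot> id\<close>, so that every map respecting scalars and
  the identity, such as the one in \<open>end_op_iso\<close>, preserves it.\<close>
definition end_zero :: "('a::comm_ring_1 \<times> 'a) set \<Rightarrow> 'a cset \<Rightarrow> 'a cset" where
  "end_zero N = end_smul N 0 (end_id N)"

definition trivial_idempotents :: "('a::comm_ring_1 \<times> 'a) set \<Rightarrow> bool" where
  "trivial_idempotents N \<longleftrightarrow> end_id N \<noteq> end_zero N \<and>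
     (\<forall>e\<in>End_mod N. end_comp N e e = e \<longrightarrow> e = end_zero N \<or> e = end_id N)"

definition internal_direct_sum :: "('a::comm_ring_1 \<times> 'a) set \<Rightarrow> 'a cset set \<Rightarrow> 'a cset set \<Rightarrow> bool" where
  "internal_direct_sum N P Q \<longleftrightarrow> is_submod N P \<and> is_submod N Q \<and> P \<inter> Q = {czero N}
     \<and> {cadd N S T | S T. S \<in> P \<and> T \<in> Q} = coker N"

lemma indecomposable_iff_direct_sum:
  "indecomposable N \<longleftrightarrow> coker N \<noteq> {czero N} \<and>
     (\<forall>P Q. internal_direct_sum N P Q \<longrightarrow> P = {czero N} \<or> Q = {czero N})"
  unfolding indecomposable_def internal_direct_sum_def by blast

lemma cadd_commute: "cadd N S T = cadd N T S"
  unfolding cadd_def by (rule Collect_cong) (metis add.commute)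

lemma internal_direct_sum_commute:
  assumes "internal_direct_sum N P Q"
  shows "internal_direct_sum N Q P"
proof -
  have "{cadd N S T | S T. S \<in> Q \<and> T \<in> P} = {cadd N S T | S T. S \<in> P \<and> T \<in> Q}"
    using cadd_commute by blast
  then show ?thesis
    using assms by (simp add: internal_direct_sum_def Int_commute)
qed

context pair_submodule
begin

lemma end_zero_induced: "end_zero N = induced_endo N 0"
  by (simp add: end_zero_def end_id_induced end_smul_induced stabilizes_one)

lemma end_zero_in_End_mod: "end_zero N \<in> End_mod N"
  by (simp add: end_zero_induced induced_endo_in_End_mod stabilizes_zero)

lemma coker_trivial_iff: "coker N = {czero N} \<longleftrightarrow> end_id N = end_zero N"
proof -
  have "coker N = {czero N} \<longleftrightarrow> coset N = (\<lambda>_. czero N)"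
  proof
    assume "coker N = {czero N}"
    then show "coset N = (\<lambda>_. czero N)"
      using coset_in_coker by (intro ext) blast
  qed (simp add: coker_def)
  also have "\<dots> \<longleftrightarrow> (\<forall>v. v \<in> N)"
    by (simp add: fun_eq_iff coset_eq_zero_iff)
  also have "\<dots> \<longleftrightarrow> end_id N = end_zero N"
    by (simp add: end_id_induced end_zero_induced induced_endo_eq_iff stabilizes_one
        stabilizes_zero coset_eq_zero_iff mat2_apply_diff)
  finally show ?thesis .
qed

lemma induced_endo_idempotent_iff:
  assumes "stabilizes N E"
  shows "end_comp N (induced_endo N E) (induced_endo N E) = induced_endo N E \<longleftrightarrow>
    (\<forall>v. mat2_apply (E * E - E) v \<in> N)"
  by (simp add: assms end_comp_induced induced_endo_eq_iff stabilizes_mult)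

lemma is_submod_range: "is_submod N (range (\<lambda>v. coset N (mat2_apply X v)))"
proof -
  let ?R = "range (\<lambda>v. coset N (mat2_apply X v))"
  have "cadd N (coset N (mat2_apply X u)) (coset N (mat2_apply X v)) \<in> ?R" for u v
    by (metis cadd_coset mat2_apply_vector_add rangeI)
  moreover have "csmul N r (coset N (mat2_apply X u)) \<in> ?R" for r u
    by (metis csmul_coset mat2_apply_vsmul rangeI)
  moreover have "czero N \<in> ?R"
    by (metis czero_def mat2_apply_vector_zero rangeI)
  ultimately show ?thesis
    unfolding is_submod_def by (blast intro: coset_in_coker)
qed

lemma range_coset_eq_zero_iff:
  "range (\<lambda>v. coset N (mat2_apply X v)) = {czero N} \<longleftrightarrow> (\<forall>v. mat2_apply X v \<in> N)"
  by (auto simp: coset_eq_zero_iff simp flip: coset_eq_zero_iff)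

lemma is_submod_coset_add:
  "is_submod N P \<Longrightarrow> coset N u \<in> P \<Longrightarrow> coset N v \<in> P \<Longrightarrow> coset N (u + v) \<in> P"
  by (simp add: is_submod_def flip: cadd_coset)

lemma is_submod_coset_vsmul: "is_submod N P \<Longrightarrow> coset N u \<in> P \<Longrightarrow> coset N (vsmul r u) \<in> P"
  by (simp add: is_submod_def flip: csmul_coset)

lemma is_submod_coset_uminus: "is_submod N P \<Longrightarrow> coset N u \<in> P \<Longrightarrow> coset N (- u) \<in> P"
  using is_submod_coset_vsmul[of P u "- 1"] by simp

lemma is_submod_coset_diff:
  "is_submod N P \<Longrightarrow> coset N u \<in> P \<Longrightarrow> coset N v \<in> P \<Longrightarrow> coset N (u - v) \<in> P"
  using is_submod_coset_add[of P u "- v"] is_submod_coset_uminus[of P v] by simp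

lemma is_submod_eq_zeroI:
  assumes P: "is_submod N P" and zero: "\<And>v. coset N v \<in> P \<Longrightarrow> v \<in> N"
  shows "P = {czero N}"
proof (intro set_eqI iffI)
  fix S
  assume "S \<in> P"
  moreover obtain v where "S = coset N v"
    using \<open>S \<in> P\<close> P unfolding is_submod_def by (meson cokerE subsetD)
  ultimately show "S \<in> {czero N}"
    using zero by (simp add: coset_eq_zero_iff)
qed (use P in \<open>simp add: is_submod_def\<close>)

lemma idempotent_direct_sum:
  assumes E: "stabilizes N E" and idem: "\<And>v. mat2_apply (E * E - E) v \<in> N"
  shows "internal_direct_sum N (range (\<lambda>v. coset N (mat2_apply E v)))
    (range (\<lambda>v. coset N (mat2_apply (1 - E) v)))"
    (is "internal_direct_sum N ?P ?Q")
proof -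
  have inter: "S \<in> {czero N}" if PQ: "S \<in> ?P" "S \<in> ?Q" for S
  proof -
    obtain v w where S: "S = coset N (mat2_apply E v)" "S = coset N (mat2_apply (1 - E) w)"
      using PQ by blast
    then have "mat2_apply E v - mat2_apply (1 - E) w \<in> N"
      by (simp add: flip: coset_eq_iff)
    then have "mat2_apply E (mat2_apply E v - mat2_apply (1 - E) w) \<in> N"
      using E by (simp add: stabilizes_def)
    moreover have "mat2_apply E (mat2_apply E v - mat2_apply (1 - E) w)
        = mat2_apply E v + (mat2_apply (E * E - E) v + mat2_apply (E * E - E) w)"
      by (simp add: mat2_apply_diff mat2_apply_mult mat2_apply_vector_diff mat2_apply_vector_add
          algebra_simps)
    ultimately have "mat2_apply E v \<in> N"
      using idem diff_mem add_mem by (metis add_diff_cancel_right')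
    then show ?thesis
      using S by (simp add: coset_eq_zero_iff)
  qed
  have "czero N \<in> ?P" "czero N \<in> ?Q"
    using is_submod_range by (simp_all add: is_submod_def)
  with inter have "?P \<inter> ?Q = {czero N}"
    by blast
  moreover have "{cadd N S T | S T. S \<in> ?P \<and> T \<in> ?Q} = coker N"
  proof (intro set_eqI iffI)
    fix X
    assume "X \<in> {cadd N S T | S T. S \<in> ?P \<and> T \<in> ?Q}"
    then obtain S T where "X = cadd N S T" "S \<in> ?P" "T \<in> ?Q"
      by blast
    then show "X \<in> coker N"
      by (auto simp: cadd_coset)
  next
    fix X
    assume "X \<in> coker N"
    then obtain v where "X = coset N v"
      by (rule cokerE)
    then have "X = cadd N (coset N (mat2_apply E v)) (coset N (mat2_apply (1 - E) v))"
      by (simp add: cadd_coset mat2_apply_diff)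
    then show "X \<in> {cadd N S T | S T. S \<in> ?P \<and> T \<in> ?Q}"
      by (intro CollectI exI[of _ "coset N (mat2_apply E v)"] exI[of _ "coset N (mat2_apply (1 - E) v)"])
        simp
  qed
  ultimately show ?thesis
    unfolding internal_direct_sum_def using is_submod_range by simp
qed

lemma indecomposable_imp_trivial_idempotents:
  assumes ind: "indecomposable N"
  shows "trivial_idempotents N"
  unfolding trivial_idempotents_def
proof (intro conjI ballI impI)
  show "end_id N \<noteq> end_zero N"
    using ind by (simp add: indecomposable_def coker_trivial_iff)
next
  fix e
  assume "e \<in> End_mod N" "end_comp N e e = e"
  then obtain E where E: "stabilizes N E" and e: "e = induced_endo N E"
    and idem: "\<And>v. mat2_apply (E * E - E) v \<in> N"
    using End_mod_induced induced_endo_idempotent_iff by metis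
  have "range (\<lambda>v. coset N (mat2_apply E v)) = {czero N} \<or>
      range (\<lambda>v. coset N (mat2_apply (1 - E) v)) = {czero N}"
    using ind idempotent_direct_sum[OF E idem] by (meson indecomposable_iff_direct_sum)
  then have "(\<forall>v. mat2_apply E v \<in> N) \<or> (\<forall>v. mat2_apply (1 - E) v \<in> N)"
    by (simp only: range_coset_eq_zero_iff)
  then show "e = end_zero N \<or> e = end_id N"
  proof
    assume "\<forall>v. mat2_apply E v \<in> N"
    then show ?thesis
      by (simp add: e end_zero_induced induced_endo_eq_iff E stabilizes_zero)
  next
    assume "\<forall>v. mat2_apply (1 - E) v \<in> N"
    then have "\<forall>v. mat2_apply (E - 1) v \<in> N"
      using uminus_mem by (metis minus_diff_eq mat2_apply_diff)
    then show ?thesis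
      by (simp add: e end_id_induced induced_endo_eq_iff E stabilizes_one)
  qed
qed

lemma direct_sum_split:
  assumes "internal_direct_sum N P Q"
  obtains p where "coset N p \<in> P" "coset N (v - p) \<in> Q"
proof -
  have "coset N v \<in> {cadd N S T | S T. S \<in> P \<and> T \<in> Q}"
    using assms by (simp add: internal_direct_sum_def)
  then obtain S T where ST: "coset N v = cadd N S T" "S \<in> P" "T \<in> Q"
    by blast
  moreover obtain p q where "S = coset N p" "T = coset N q"
    using ST assms unfolding internal_direct_sum_def is_submod_def by (meson cokerE subsetD)
  moreover have "coset N (v - p) = coset N q"
    using ST \<open>S = coset N p\<close> \<open>T = coset N q\<close> by (simp add: cadd_coset coset_eq_iff diff_diff_eq)
  ultimately show ?thesis
    using that by simp
qed

lemma direct_sum_inter: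
  assumes "internal_direct_sum N P Q" "coset N v \<in> P" "coset N v \<in> Q"
  shows "v \<in> N"
  using assms by (auto simp: internal_direct_sum_def simp flip: coset_eq_zero_iff)

text \<open>The columns of the projection matrix are the \<open>P\<close>-components of the two standard basis
  vectors.\<close>
lemma direct_sum_projection:
  assumes PQ: "internal_direct_sum N P Q"
  obtains E where "\<And>v. coset N (mat2_apply E v) \<in> P" "\<And>v. coset N (mat2_apply (1 - E) v) \<in> Q"
proof -
  have P: "is_submod N P"
    using PQ by (simp add: internal_direct_sum_def)
  have Q: "is_submod N Q"
    using PQ by (simp add: internal_direct_sum_def)
  obtain p1 p2 where p: "coset N p1 \<in> P" "coset N ((1, 0) - p1) \<in> Q"
    "coset N p2 \<in> P" "coset N ((0, 1) - p2) \<in> Q"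
    using direct_sum_split[OF PQ] by metis
  define E where "E = Mat2 (fst p1) (fst p2) (snd p1) (snd p2)"
  have "mat2_apply E v = vsmul (fst v) p1 + vsmul (snd v) p2" for v
    by (simp add: E_def mat2_apply_def vsmul_def)
  moreover have "mat2_apply (1 - E) v = vsmul (fst v) ((1, 0) - p1) + vsmul (snd v) ((0, 1) - p2)" for v
    by (simp add: E_def mat2_ops mat2_apply_def vsmul_def algebra_simps)
  ultimately show ?thesis
    using p by (intro that[of E]) (simp_all add: P Q is_submod_coset_add is_submod_coset_vsmul)
qed

lemma direct_sum_projection_eq_zero:
  assumes PQ: "internal_direct_sum N P Q"
    and EQ: "\<And>v. coset N (mat2_apply (1 - E) v) \<in> Q" and zero: "\<And>v. mat2_apply E v \<in> N"
  shows "P = {czero N}"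
proof (rule is_submod_eq_zeroI)
  show "is_submod N P"
    using PQ by (simp add: internal_direct_sum_def)
  have Q: "is_submod N Q"
    using PQ by (simp add: internal_direct_sum_def)
  fix v
  assume "coset N v \<in> P"
  moreover have "coset N (mat2_apply E v) = czero N"
    using zero by (simp add: coset_eq_zero_iff)
  then have "coset N (mat2_apply E v) \<in> Q"
    using Q by (simp add: is_submod_def)
  then have "coset N (mat2_apply E v + mat2_apply (1 - E) v) \<in> Q"
    using EQ Q is_submod_coset_add by blast
  then have "coset N v \<in> Q"
    by (simp add: mat2_apply_diff)
  ultimately show "v \<in> N"
    using PQ direct_sum_inter by blast
qed

lemma trivial_idempotents_imp_indecomposable:
  assumes triv: "trivial_idempotents N"
  shows "indecomposable N"
  unfolding indecomposable_iff_direct_sum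
proof (intro conjI allI impI)
  show "coker N \<noteq> {czero N}"
    using triv by (simp add: trivial_idempotents_def coker_trivial_iff)
next
  fix P Q
  assume PQ: "internal_direct_sum N P Q"
  have P: "is_submod N P"
    using PQ by (simp add: internal_direct_sum_def)
  have Q: "is_submod N Q"
    using PQ by (simp add: internal_direct_sum_def)
  obtain E where EP: "\<And>v. coset N (mat2_apply E v) \<in> P"
    and EQ: "\<And>v. coset N (mat2_apply (1 - E) v) \<in> Q"
    using direct_sum_projection[OF PQ] by blast
  have "stabilizes N E"
    unfolding stabilizes_def
  proof
    fix n
    assume "n \<in> N"
    then have "coset N n = czero N"
      by (simp add: coset_eq_zero_iff)
    then have "coset N n \<in> Q"
      using PQ by (simp add: internal_direct_sum_def is_submod_def)
    then have "coset N (n - mat2_apply (1 - E) n) \<in> Q"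
      using EQ Q is_submod_coset_diff by blast
    then have "coset N (mat2_apply E n) \<in> Q"
      by (simp add: mat2_apply_diff)
    then show "mat2_apply E n \<in> N"
      using PQ EP direct_sum_inter by blast
  qed
  moreover have "mat2_apply (E * E - E) v \<in> N" for v
  proof -
    have "coset N (mat2_apply (E * E - E) v) \<in> P"
      using is_submod_coset_diff[OF P EP EP] by (simp add: mat2_apply_diff mat2_apply_mult)
    moreover have "coset N (mat2_apply (E * E - E) v) \<in> Q"
      using is_submod_coset_uminus[OF Q EQ[of "mat2_apply E v"]]
      by (simp add: mat2_apply_diff mat2_apply_mult)
    ultimately show ?thesis
      using PQ direct_sum_inter by blast
  qed
  ultimately have "induced_endo N E = end_zero N \<or> induced_endo N E = end_id N"
    using triv induced_endo_in_End_mod induced_endo_idempotent_iff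
    unfolding trivial_idempotents_def by blast
  then show "P = {czero N} \<or> Q = {czero N}"
  proof
    assume "induced_endo N E = end_zero N"
    then have "\<forall>v. mat2_apply E v \<in> N"
      using \<open>stabilizes N E\<close> by (simp add: end_zero_induced induced_endo_eq_iff stabilizes_zero)
    then show ?thesis
      using direct_sum_projection_eq_zero[OF PQ EQ] by blast
  next
    assume "induced_endo N E = end_id N"
    then have "\<forall>v. mat2_apply (E - 1) v \<in> N"
      using \<open>stabilizes N E\<close> by (simp add: end_id_induced induced_endo_eq_iff stabilizes_one)
    then have "mat2_apply (1 - E) v \<in> N" for v
      using uminus_mem by (metis minus_diff_eq mat2_apply_diff)
    moreover have "coset N (mat2_apply (1 - (1 - E)) v) \<in> P" for v
      using EP by simp
    ultimately show ?thesis
      using direct_sum_projection_eq_zero[OF internal_direct_sum_commute[OF PQ]] by blast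
  qed
qed

lemma indecomposable_iff_trivial_idempotents: "indecomposable N \<longleftrightarrow> trivial_idempotents N"
  using indecomposable_imp_trivial_idempotents trivial_idempotents_imp_indecomposable by blast

end

lemma end_op_iso_trivial_idempotents:
  assumes "pair_submodule N" and iso: "end_op_iso N N'" and triv: "trivial_idempotents N"
  shows "trivial_idempotents N'"
proof -
  interpret pair_submodule N by fact
  obtain \<Phi> where bij: "bij_betw \<Phi> (End_mod N) (End_mod N')"
    and comp: "\<And>f g. f \<in> End_mod N \<Longrightarrow> g \<in> End_mod N \<Longrightarrow>
      \<Phi> (end_comp N f g) = end_comp N' (\<Phi> g) (\<Phi> f)"
    and smul: "\<And>r f. f \<in> End_mod N \<Longrightarrow> \<Phi> (end_smul N r f) = end_smul N' r (\<Phi> f)"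
    and id: "\<Phi> (end_id N) = end_id N'"
    using iso unfolding end_op_iso_def by blast
  have inj: "inj_on \<Phi> (End_mod N)" and onto: "\<Phi> ` End_mod N = End_mod N'"
    using bij by (simp_all add: bij_betw_def)
  have zero: "\<Phi> (end_zero N) = end_zero N'"
    by (simp add: end_zero_def smul end_id_in_End_mod id)
  show ?thesis
    unfolding trivial_idempotents_def
  proof (intro conjI ballI impI)
    show "end_id N' \<noteq> end_zero N'"
      using triv inj end_id_in_End_mod end_zero_in_End_mod
      by (metis id zero inj_on_def trivial_idempotents_def)
  next
    fix e'
    assume "e' \<in> End_mod N'" and idem: "end_comp N' e' e' = e'"
    then obtain e where e: "e \<in> End_mod N" "e' = \<Phi> e"
      using onto by blast
    then have "end_comp N e e = e"
      using idem comp inj end_comp_closed by (metis inj_on_def)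
    then have "e = end_zero N \<or> e = end_id N"
      using triv e(1) by (simp add: trivial_idempotents_def)
    then show "e' = end_zero N' \<or> e' = end_id N'"
      using e(2) zero id by auto
  qed
qed

section \<open>Exact pairs of zero divisors\<close>

lemma exact_pair_sym: "exact_pair x y \<Longrightarrow> exact_pair y x"
  by (simp add: exact_pair_def)

lemma exact_pair_annihilator:
  assumes "exact_pair x y"
  shows "t * x = 0 \<longleftrightarrow> (\<exists>r. t = r * y)"
proof -
  have "t \<in> Ann x \<longleftrightarrow> t \<in> principal_ideal y"
    using assms by (simp add: exact_pair_def)
  then show ?thesis
    by (simp add: Ann_def principal_ideal_def)
qed

lemma exact_pair_kernel:
  assumes xy: "exact_pair x y" and v: "mat2_apply (Mat2 x a 0 y) v = 0"
  shows "v \<in> range (mat2_apply (Mat2 y (- a) 0 x))"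
proof -
  obtain u t where v_eq: "v = (u, t)"
    by (cases v)
  have "t * y = 0"
    using v by (simp add: v_eq mat2_apply_def zero_prod_def mult.commute)
  then obtain r where r: "t = r * x"
    using exact_pair_annihilator[OF exact_pair_sym[OF xy]] by blast
  have "(u + a * r) * x = 0"
    using v by (simp add: v_eq r mat2_apply_def zero_prod_def algebra_simps)
  then obtain s where "u + a * r = s * y"
    using exact_pair_annihilator[OF xy] by blast
  then have "v = mat2_apply (Mat2 y (- a) 0 x) (s, r)"
    by (simp add: v_eq r mat2_apply_def algebra_simps)
  then show ?thesis
    by blast
qed

lemma exact_pair_matrix_pair:
  assumes "exact_pair x y"
  shows "exact_matrix_pair (Mat2 x a 0 y) (Mat2 y (- a) 0 x)"
proof
  show "mat2_adj (Mat2 x a 0 y) = Mat2 y (- a) 0 x"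
    by (simp add: mat2_adj_def)
  have "\<exists>r. y = r * y"
    by (rule exI[of _ 1]) simp
  then have "y * x = 0"
    by (simp add: exact_pair_annihilator[OF assms])
  then show "Mat2 x a 0 y * Mat2 y (- a) 0 x = 0"
    by (simp add: mat2_ops mult.commute)
  show "v \<in> range (mat2_apply (Mat2 y (- a) 0 x))" if "mat2_apply (Mat2 x a 0 y) v = 0" for v
    by (rule exact_pair_kernel[OF assms that])
  show "v \<in> range (mat2_apply (Mat2 x a 0 y))" if "mat2_apply (Mat2 y (- a) 0 x) v = 0" for v
    using exact_pair_kernel[OF exact_pair_sym[OF assms] that] by simp
qed

lemma G_mod_eq_range: "G_mod x y a = range (mat2_apply (Mat2 x a 0 y))"
  by (simp add: G_mod_def gamma_map_def mat2_apply_def fun_eq_iff)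

lemma H_mod_eq_range: "H_mod x y a = range (mat2_apply (Mat2 y (- a) 0 x))"
  by (simp add: H_mod_def eta_map_def mat2_apply_def fun_eq_iff)

theorem corollary4p3:
  fixes x y a :: "'a::comm_ring_1"
  assumes "noetherian_ring TYPE('a)"
    and "local_ring TYPE('a)"
    and "exact_pair x y"
  shows "end_op_iso (G_mod x y a) (H_mod x y a)
     \<and> (indecomposable (G_mod x y a) \<longleftrightarrow> indecomposable (H_mod x y a))"
proof -
  interpret exact_matrix_pair "Mat2 x a 0 y" "Mat2 y (- a) 0 x"
    using assms(3) by (rule exact_pair_matrix_pair)
  interpret dual: exact_matrix_pair "Mat2 y (- a) 0 x" "Mat2 x a 0 y"
    by (rule dual)
  interpret G: pair_submodule "G_mod x y a"
    unfolding G_mod_eq_range by (rule pair_submodule_range)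
  interpret H: pair_submodule "H_mod x y a"
    unfolding H_mod_eq_range by (rule pair_submodule_range)
  have iso: "end_op_iso (G_mod x y a) (H_mod x y a)"
    unfolding G_mod_eq_range H_mod_eq_range by (rule end_op_iso)
  have iso': "end_op_iso (H_mod x y a) (G_mod x y a)"
    unfolding G_mod_eq_range H_mod_eq_range by (rule dual.end_op_iso)
  show ?thesis
    using iso end_op_iso_trivial_idempotents[OF G.pair_submodule_axioms iso]
      end_op_iso_trivial_idempotents[OF H.pair_submodule_axioms iso']
    unfolding G.indecomposable_iff_trivial_idempotents H.indecomposable_iff_trivial_idempotents
    by blast
qed

end
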